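(* Consider a two-asset G3M with fee parameter $\gamma\in(0,1)$ and a continuous reference price process $(S_t)_{t\ge0}$, $S_t>0$, with initial pool price $P_0$ satisfying $\gamma P_0\le S_0\le\gamma^{-1}P_0$. Assume there are no noise traders, the reference market is frictionless with infinite liquidity, and arbitrageurs continuously monitor and immediately act on arbitrage opportunities (so the pool price is moved only by arbitrage trades keeping it within the no-arbitrage band $[\gamma S_t,\gamma^{-1}S_t]$). Write $\ln P_t=\ln P_0+U_t-L_t$, where $L_t$ (resp. $U_t$) is the cumulative decrease (resp. increase) of the log pool price caused by arbitrage trades selling $X$ to (resp. buying $X$ from) the pool. Then, with $Z_t=\ln(S_t/P_t)$: (a) $Z_t=\ln S_t-\ln P_0+L_t-U_t$ and $Z_t\in[\ln\gamma,-\ln\gamma]$ for all $t\ge0$; (b) $L_t$ and $U_t$ are non-decreasing and continuous with $L_0=U_0=0$; (c) $L_t$ increases only when $Z_t=\ln\gamma$ and $U_t$ increases only when $Z_t=-\ln\gamma$. Furthermore, $$L_t=\sup_{0\le s\le t}\big(-\ln(\gamma P_0)+\ln S_s-U_s\big)^-,\qquad U_t=\sup_{0\le s\le t}\big(\ln(\gamma^{-1}P_0)-\ln S_s-L_s\big)^-,$$ where $(a)^-=\max\{-a,0\}$.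
   Context: $P_t$ is the G3M pool price of asset $X$ in units of $Y$ and $S_t$ the reference-market price. A process "increases only when $Z_t=a$" means that every point of increase of the process is a time $t$ with $Z_t=a$. *)

theory Defs
  imports "HOL-Analysis.Analysis"
begin

definition neg_part :: "real \<Rightarrow> real" where
  "neg_part a = max (- a) 0"

text \<open>t is a point of increase of f on the time axis [0,\<infinity>):
  f strictly increases across every neighbourhood of t (left end clamped at time 0).\<close>
definition incr_point :: "(real \<Rightarrow> real) \<Rightarrow> real \<Rightarrow> bool" where
  "incr_point f t \<longleftrightarrow> 0 \<le> t \<and> (\<forall>\<epsilon>>0. f (max 0 (t - \<epsilon>)) < f (t + \<epsilon>))"

end

theory Submission imports Defs begin

text \<open>If \<open>L\<close> jumped at time \<open>t\<close>, then \<open>t\<close> would be a point of increase of \<open>L\<close>,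
  so \<open>Z\<^sub>t = ln \<gamma>\<close> is the bottom of the band. Since \<open>Z\<close> was at least \<open>ln \<gamma>\<close> just before \<open>t\<close>
  and \<open>ln S\<close> is continuous, \<open>U\<close> must jump at \<open>t\<close> too, forcing \<open>Z\<^sub>t = - ln \<gamma>\<close>, which is
  impossible for \<open>\<gamma> < 1\<close>; symmetrically for \<open>U\<close>. Hence \<open>L\<close> and \<open>U\<close> are continuous, and the
  supremum formulas are Skorokhod's: the band gives \<open>L\<^sub>t \<ge> (\<dots>)\<^sup>-\<close> at all times, with
  equality at the first time \<open>\<tau> \<le> t\<close> at which \<open>L\<close> reaches the level \<open>L\<^sub>t\<close>, which is a point of
  increase of \<open>L\<close>.\<close>

text \<open>For monotone \<open>F\<close> and \<open>t > 0\<close> this says \<open>F (t-) < F t\<close>; it holds vacuously at \<open>t = 0\<close>.\<close>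
definition left_jump :: "(real \<Rightarrow> real) \<Rightarrow> real \<Rightarrow> bool" where
  "left_jump F t \<longleftrightarrow> (\<exists>e>0. \<forall>s\<in>{0..<t}. F s \<le> F t - e)"

lemma incr_point_nonneg: "incr_point F t \<Longrightarrow> 0 \<le> t"
  by (simp add: incr_point_def)

lemma left_jump_imp_incr_point:
  assumes mono: "mono_on {0..} F" and "0 < t" and "left_jump F t"
  shows "incr_point F t"
  unfolding incr_point_def
proof (intro conjI allI impI)
  show "0 \<le> t" using \<open>0 < t\<close> by simp
  obtain e where "e > 0" and jump: "\<forall>s\<in>{0..<t}. F s \<le> F t - e"
    using \<open>left_jump F t\<close> by (auto simp: left_jump_def)
  fix \<epsilon> :: real assume "\<epsilon> > 0"
  have "F (max 0 (t - \<epsilon>)) \<le> F t - e" using jump \<open>\<epsilon> > 0\<close> \<open>0 < t\<close> by auto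
  moreover have "F t \<le> F (t + \<epsilon>)" using mono \<open>\<epsilon> > 0\<close> \<open>0 < t\<close> by (auto intro: mono_onD)
  ultimately show "F (max 0 (t - \<epsilon>)) < F (t + \<epsilon>)" using \<open>e > 0\<close> by linarith
qed

text \<open>The last hypothesis says that \<open>G - f\<close> has a left jump of size \<open>e\<close> at \<open>t\<close>.\<close>
lemma left_jump_transfer:
  fixes f G :: "real \<Rightarrow> real"
  assumes mono: "mono_on {0..} G" and "0 < t" "0 < e"
    and f_cont: "continuous (at t within {0..}) f"
    and jump: "\<forall>s\<in>{0..<t}. G s \<le> G t + (f s - f t) - e"
  shows "left_jump G t"
proof -
  obtain d where "d > 0" and d: "\<forall>s\<in>{0..}. dist s t < d \<longrightarrow> dist (f s) (f t) < e/2"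
    using f_cont \<open>0 < e\<close> unfolding continuous_within_eps_delta by (meson half_gt_zero)
  have "G s \<le> G t - e/2" if s: "s \<in> {0..<t}" for s
  proof -
    define s' where "s' = max s (t - d/2)"
    have s': "s' \<in> {0..<t}" "s \<le> s'" "dist s' t < d"
      using s \<open>d > 0\<close> unfolding s'_def dist_real_def by auto
    have "G s \<le> G s'" using mono s' s by (auto intro: mono_onD)
    also have "\<dots> \<le> G t + (f s' - f t) - e" using jump s' by auto
    also have "\<dots> \<le> G t - e/2"
    proof -
      have "\<bar>f s' - f t\<bar> < e/2" using d s' by (auto simp: dist_real_def)
      then show ?thesis by linarith
    qed
    finally show ?thesis .
  qed
  then show ?thesis using \<open>0 < e\<close> unfolding left_jump_def by (intro exI[of _ "e/2"]) auto
qed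

lemma tendsto_at_left_if_no_left_jump:
  assumes mono: "mono_on {0..} F" and "0 < t" and no_jump: "\<not> left_jump F t"
  shows "(F \<longlongrightarrow> F t) (at_left t)"
proof (rule tendstoI)
  fix e :: real assume "0 < e"
  then obtain s where s: "s \<in> {0..<t}" "F t - e < F s"
    using no_jump unfolding left_jump_def by (auto simp: not_le)
  have "dist (F x) (F t) < e" if "s < x" "x < t" for x
  proof -
    have "F s \<le> F x" "F x \<le> F t" using mono s that by (auto intro: mono_onD)
    then show ?thesis using s by (simp add: dist_real_def)
  qed
  then show "eventually (\<lambda>x. dist (F x) (F t) < e) (at_left t)"
    unfolding eventually_at_left_field using s by auto
qed

lemma continuous_on_if_no_left_jump:
  assumes mono: "mono_on {0..} F"
    and right_cont: "\<forall>t\<ge>0. continuous (at_right t) F"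
    and no_jump: "\<forall>t>0. \<not> left_jump F t"
  shows "continuous_on {0..} F"
  unfolding continuous_on_eq_continuous_within
proof
  fix t :: real assume "t \<in> {0..}"
  then consider "t = 0" | "0 < t" by fastforce
  then show "continuous (at t within {0..}) F"
  proof cases
    case 1
    then show ?thesis using right_cont by (simp add: at_within_Ici_at_right)
  next
    case 2
    then have "at t within {0..} = at t" by (intro at_within_interior) auto
    moreover have "continuous (at_left t) F"
      using tendsto_at_left_if_no_left_jump[OF mono 2] no_jump 2 by (simp add: continuous_within)
    ultimately show ?thesis using right_cont 2 by (simp add: continuous_at_split)
  qed
qed

text \<open>The corresponding statement for \<open>U\<close> is this one applied to \<open>- Z\<close>, with \<open>L\<close> and \<open>U\<close>
  exchanged.\<close>
lemma regulator_no_left_jump: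
  fixes Y Z L U :: "real \<Rightarrow> real"
  assumes "a < b" and Y_cont: "continuous_on {0..} Y"
    and mono: "mono_on {0..} L" "mono_on {0..} U"
    and Z_eq: "\<And>t. 0 \<le> t \<Longrightarrow> Z t = Y t + L t - U t"
    and band: "\<And>t. 0 \<le> t \<Longrightarrow> a \<le> Z t"
    and L_contact: "\<And>t. incr_point L t \<Longrightarrow> Z t = a"
    and U_contact: "\<And>t. incr_point U t \<Longrightarrow> Z t = b"
    and "0 < t"
  shows "\<not> left_jump L t"
proof
  assume "left_jump L t"
  then obtain e where "e > 0" and jump: "\<forall>s\<in>{0..<t}. L s \<le> L t - e"
    unfolding left_jump_def by blast
  have at_bottom: "Z t = a"
    using L_contact left_jump_imp_incr_point[OF mono(1) \<open>0 < t\<close> \<open>left_jump L t\<close>] by blast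
  have "U s \<le> U t + (Y s - Y t) - e" if "s \<in> {0..<t}" for s
    using band[of s] Z_eq[of s] Z_eq[of t] jump at_bottom that \<open>0 < t\<close> by fastforce
  moreover have "continuous (at t within {0..}) Y"
    using Y_cont \<open>0 < t\<close> by (simp add: continuous_on_eq_continuous_within)
  ultimately have "left_jump U t"
    using left_jump_transfer[OF mono(2) \<open>0 < t\<close> \<open>e > 0\<close>] by blast
  then have "Z t = b"
    using U_contact left_jump_imp_incr_point[OF mono(2) \<open>0 < t\<close>] by blast
  with at_bottom \<open>a < b\<close> show False by simp
qed

lemma regulators_continuous_on:
  fixes Y Z L U :: "real \<Rightarrow> real"
  assumes "a < b" and Y_cont: "continuous_on {0..} Y"
    and mono: "mono_on {0..} L" "mono_on {0..} U"
    and right_cont: "\<forall>t\<ge>0. continuous (at_right t) L" "\<forall>t\<ge>0. continuous (at_right t) U"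
    and Z_eq: "\<And>t. 0 \<le> t \<Longrightarrow> Z t = Y t + L t - U t"
    and band: "\<And>t. 0 \<le> t \<Longrightarrow> a \<le> Z t" "\<And>t. 0 \<le> t \<Longrightarrow> Z t \<le> b"
    and L_contact: "\<And>t. incr_point L t \<Longrightarrow> Z t = a"
    and U_contact: "\<And>t. incr_point U t \<Longrightarrow> Z t = b"
  shows "continuous_on {0..} L" "continuous_on {0..} U"
proof -
  have "\<not> left_jump L t" if "0 < t" for t
    using regulator_no_left_jump[OF \<open>a < b\<close> Y_cont mono Z_eq band(1) L_contact U_contact that] .
  then show "continuous_on {0..} L"
    using continuous_on_if_no_left_jump[OF mono(1) right_cont(1)] by blast
  have "\<not> left_jump U t" if "0 < t" for t
  proof (rule regulator_no_left_jump[of "- b" "- a" "\<lambda>t. - Y t" U L "\<lambda>t. - Z t"])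
    show "continuous_on {0..} (\<lambda>t. - Y t)" using Y_cont by (rule continuous_on_minus)
    show "- Z s = - Y s + U s - L s" if "0 \<le> s" for s using Z_eq[OF that] by simp
  qed (use \<open>a < b\<close> mono band L_contact U_contact that in auto)
  then show "continuous_on {0..} U"
    using continuous_on_if_no_left_jump[OF mono(2) right_cont(2)] by blast
qed

lemma exists_incr_point_at_level:
  fixes F :: "real \<Rightarrow> real"
  assumes cont: "continuous_on {0..} F" and mono: "mono_on {0..} F"
    and "0 \<le> t" and "F t \<noteq> F 0"
  obtains \<tau> where "\<tau> \<in> {0..t}" "incr_point F \<tau>" "F \<tau> = F t"
proof -
  define A where "A = {s \<in> {0..t}. F s = F t}"
  have "closed A" unfolding A_def
    by (rule continuous_closed_preimage_constant) (use continuous_on_subset[OF cont] in auto)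
  moreover have "t \<in> A" using \<open>0 \<le> t\<close> by (simp add: A_def)
  ultimately have "Inf A \<in> A" by (intro closed_contains_Inf) (auto simp: A_def bdd_below_def)
  define \<tau> where "\<tau> = Inf A"
  have \<tau>: "\<tau> \<in> {0..t}" "F \<tau> = F t" using \<open>Inf A \<in> A\<close> by (auto simp: \<tau>_def A_def)
  have first: "\<tau> \<le> s" if "s \<in> A" for s
    unfolding \<tau>_def using that by (intro cInf_lower) (auto simp: A_def bdd_below_def)
  have "\<tau> \<noteq> 0" using \<tau> \<open>F t \<noteq> F 0\<close> by auto
  have "incr_point F \<tau>" unfolding incr_point_def
  proof (intro conjI allI impI)
    show "0 \<le> \<tau>" using \<tau> by simp
    fix \<epsilon> :: real assume "\<epsilon> > 0"
    define m where "m = max 0 (\<tau> - \<epsilon>)"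
    have m: "0 \<le> m" "m < \<tau>" using \<open>\<epsilon> > 0\<close> \<tau> \<open>\<tau> \<noteq> 0\<close> by (auto simp: m_def)
    then have "F m \<noteq> F \<tau>" using first \<tau> by (force simp: A_def)
    moreover have "F m \<le> F \<tau>" "F \<tau> \<le> F (\<tau> + \<epsilon>)"
      using m \<open>\<epsilon> > 0\<close> by (auto intro: mono_onD[OF mono])
    ultimately show "F (max 0 (\<tau> - \<epsilon>)) < F (\<tau> + \<epsilon>)" by (simp add: m_def[symmetric])
  qed
  with \<tau> show thesis using that by blast
qed

lemma regulator_eq_SUP_neg_part:
  fixes F g :: "real \<Rightarrow> real"
  assumes cont: "continuous_on {0..} F" and mono: "mono_on {0..} F" and "F 0 = 0"
    and above: "\<And>s. 0 \<le> s \<Longrightarrow> - g s \<le> F s"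
    and contact: "\<And>s. incr_point F s \<Longrightarrow> - g s = F s"
    and "0 \<le> t"
  shows "F t = (SUP s\<in>{0..t}. neg_part (g s))"
proof -
  have F_nonneg: "0 \<le> F s" if "0 \<le> s" for s
    using mono_onD[OF mono, of 0 s] that \<open>F 0 = 0\<close> by simp
  have neg_part_eq: "neg_part (g s) = F s" if "incr_point F s" for s
    using contact[OF that] F_nonneg[OF incr_point_nonneg[OF that]] by (simp add: neg_part_def)
  have bounded: "neg_part (g s) \<le> F t" if "s \<in> {0..t}" for s
    using above[of s] mono_onD[OF mono, of s t] F_nonneg[of t] that by (auto simp: neg_part_def)
  have attained: "\<exists>s\<in>{0..t}. neg_part (g s) = F t"
  proof (cases "F t = F 0")
    case True
    then show ?thesis
      using above[of 0] \<open>F 0 = 0\<close> \<open>0 \<le> t\<close> by (intro bexI[of _ 0]) (auto simp: neg_part_def)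
  next
    case False
    then show ?thesis
      using exists_incr_point_at_level[OF cont mono \<open>0 \<le> t\<close>] neg_part_eq by metis
  qed
  then have "F t \<in> (\<lambda>s. neg_part (g s)) ` {0..t}" by force
  then show ?thesis
    using bounded by (intro cSup_eq_maximum[symmetric]) auto
qed

lemma regulators_eq_SUP_neg_part:
  fixes Y Z L U :: "real \<Rightarrow> real"
  assumes cont: "continuous_on {0..} L" "continuous_on {0..} U"
    and mono: "mono_on {0..} L" "mono_on {0..} U" and init: "L 0 = 0" "U 0 = 0"
    and Z_eq: "\<And>t. 0 \<le> t \<Longrightarrow> Z t = Y t + L t - U t"
    and band: "\<And>t. 0 \<le> t \<Longrightarrow> a \<le> Z t" "\<And>t. 0 \<le> t \<Longrightarrow> Z t \<le> b"
    and L_contact: "\<And>t. incr_point L t \<Longrightarrow> Z t = a"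
    and U_contact: "\<And>t. incr_point U t \<Longrightarrow> Z t = b"
    and "0 \<le> t"
  shows "L t = (SUP s\<in>{0..t}. neg_part (Y s - a - U s))"
    and "U t = (SUP s\<in>{0..t}. neg_part (b - Y s - L s))"
proof -
  show "L t = (SUP s\<in>{0..t}. neg_part (Y s - a - U s))"
  proof (rule regulator_eq_SUP_neg_part[OF cont(1) mono(1) init(1) _ _ \<open>0 \<le> t\<close>])
    show "- (Y s - a - U s) \<le> L s" if "0 \<le> s" for s
      using band(1)[OF that] Z_eq[OF that] by linarith
    show "- (Y s - a - U s) = L s" if "incr_point L s" for s
      using L_contact[OF that] Z_eq[OF incr_point_nonneg[OF that]] by linarith
  qed
  show "U t = (SUP s\<in>{0..t}. neg_part (b - Y s - L s))"
  proof (rule regulator_eq_SUP_neg_part[OF cont(2) mono(2) init(2) _ _ \<open>0 \<le> t\<close>])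
    show "- (b - Y s - L s) \<le> U s" if "0 \<le> s" for s
      using band(2)[OF that] Z_eq[OF that] by linarith
    show "- (b - Y s - L s) = U s" if "incr_point U s" for s
      using U_contact[OF that] Z_eq[OF incr_point_nonneg[OF that]] by linarith
  qed
qed

lemma ln_div_in_band:
  fixes \<gamma> s p :: real
  assumes "0 < \<gamma>" "0 < s" "0 < p" "\<gamma> * s \<le> p" "p \<le> s / \<gamma>"
  shows "ln \<gamma> \<le> ln (s / p)" "ln (s / p) \<le> - ln \<gamma>"
proof -
  have "\<gamma> * p \<le> s" using assms by (simp add: pos_le_divide_eq mult.commute)
  then have "ln (\<gamma> * s) \<le> ln p" "ln (\<gamma> * p) \<le> ln s"
    using assms by simp_all
  then show "ln \<gamma> \<le> ln (s / p)" "ln (s / p) \<le> - ln \<gamma>"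
    using assms by (simp_all add: ln_div ln_mult)
qed

theorem mainTheorem2:
  fixes \<gamma> :: real and S P L U :: "real \<Rightarrow> real"
  assumes gamma: "0 < \<gamma>" "\<gamma> < 1"
    and S_cont: "continuous_on {0..} S"
    and S_pos: "\<forall>t\<ge>0. S t > 0"
    and P_pos: "\<forall>t\<ge>0. P t > 0"
    and init_band: "\<gamma> * P 0 \<le> S 0" "S 0 \<le> P 0 / \<gamma>"
    and decomp: "\<forall>t\<ge>0. ln (P t) = ln (P 0) + U t - L t"
    and cum_init: "L 0 = 0" "U 0 = 0"
    and cum_mono: "mono_on {0..} L" "mono_on {0..} U"
    and cum_rc: "\<forall>t\<ge>0. continuous (at_right t) L" "\<forall>t\<ge>0. continuous (at_right t) U"
    and no_arb_band: "\<forall>t\<ge>0. \<gamma> * S t \<le> P t \<and> P t \<le> S t / \<gamma>"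
    and arb_sell: "\<forall>t. incr_point L t \<longrightarrow> P t = S t / \<gamma>"
    and arb_buy: "\<forall>t. incr_point U t \<longrightarrow> P t = \<gamma> * S t"
  shows
    "(\<forall>t\<ge>0. ln (S t / P t) = ln (S t) - ln (P 0) + L t - U t
              \<and> ln \<gamma> \<le> ln (S t / P t) \<and> ln (S t / P t) \<le> - ln \<gamma>)
     \<and> mono_on {0..} L \<and> mono_on {0..} U
     \<and> continuous_on {0..} L \<and> continuous_on {0..} U \<and> L 0 = 0 \<and> U 0 = 0
     \<and> (\<forall>t. incr_point L t \<longrightarrow> ln (S t / P t) = ln \<gamma>)
     \<and> (\<forall>t. incr_point U t \<longrightarrow> ln (S t / P t) = - ln \<gamma>)
     \<and> (\<forall>t\<ge>0. L t = (SUP s\<in>{0..t}. neg_part (- ln (\<gamma> * P 0) + ln (S s) - U s))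
              \<and> U t = (SUP s\<in>{0..t}. neg_part (ln (P 0 / \<gamma>) - ln (S s) - L s)))"
proof -
  \<comment> \<open>\<open>init_band\<close> is the case \<open>t = 0\<close> of \<open>no_arb_band\<close> and is not needed.\<close>
  have Z_eq: "ln (S t / P t) = (ln (S t) - ln (P 0)) + L t - U t" if "0 \<le> t" for t
    using S_pos[rule_format, OF that] P_pos[rule_format, OF that] decomp[rule_format, OF that]
    by (simp add: ln_div)
  have band: "ln \<gamma> \<le> ln (S t / P t)" "ln (S t / P t) \<le> - ln \<gamma>" if "0 \<le> t" for t
    using S_pos P_pos no_arb_band that by (intro ln_div_in_band[OF gamma(1)]; simp)+
  have L_contact: "ln (S t / P t) = ln \<gamma>" if "incr_point L t" for t
    using arb_sell[rule_format, OF that] S_pos[rule_format, OF incr_point_nonneg[OF that]] gamma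
    by simp
  have U_contact: "ln (S t / P t) = - ln \<gamma>" if "incr_point U t" for t
    using arb_buy[rule_format, OF that] S_pos[rule_format, OF incr_point_nonneg[OF that]] gamma
    by (simp add: ln_div)
  have Y_cont: "continuous_on {0..} (\<lambda>t. ln (S t) - ln (P 0))"
    using S_cont S_pos by (intro continuous_intros) auto
  have band_nonempty: "ln \<gamma> < - ln \<gamma>" using gamma by simp
  have cont: "continuous_on {0..} L" "continuous_on {0..} U"
    using regulators_continuous_on[OF band_nonempty Y_cont cum_mono cum_rc Z_eq band
        L_contact U_contact] by blast+
  have neg_part_args:
    "ln (S s) - ln (P 0) - ln \<gamma> - U s = - ln (\<gamma> * P 0) + ln (S s) - U s"
    "- ln \<gamma> - (ln (S s) - ln (P 0)) - L s = ln (P 0 / \<gamma>) - ln (S s) - L s" for s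
    using P_pos[rule_format, of 0] gamma by (simp_all add: ln_mult ln_div)
  have SUP_formulas:
    "L t = (SUP s\<in>{0..t}. neg_part (- ln (\<gamma> * P 0) + ln (S s) - U s))"
    "U t = (SUP s\<in>{0..t}. neg_part (ln (P 0 / \<gamma>) - ln (S s) - L s))" if "0 \<le> t" for t
    using regulators_eq_SUP_neg_part[OF cont cum_mono cum_init Z_eq band L_contact U_contact that]
    unfolding neg_part_args by blast+
  show ?thesis
    using Z_eq band L_contact U_contact cont cum_mono cum_init SUP_formulas by blast
qed

end
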